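(* Let $\langle X,\tau\rangle$ be a first-countable Hausdorff space containing $[0,1)$ as a dense and co-dense subset whose subspace topology is the Sorgenfrey topology on $[0,1)$ (generated by $\{[a,b)\cap[0,1)\}$). For $z\in X\setminus[0,1)$ let $\mathsf L(z)$ be the set of $x\in[0,1]$ for which there exists a sequence $p$ in $[0,1)$ converging to $z$ in $\langle X,\tau\rangle$ and converging to $x$ in $[0,1]$ with its usual Euclidean topology. Then for every $z\in X\setminus[0,1)$, $\mathsf L(z)$ is nonempty and is well-ordered by the usual order $<$ of the reals.
   Context: A subset is co-dense if its complement is dense. *)

theory Defs
  imports "HOL-Analysis.Analysis"
begin

definition sorgenfrey01 :: "real topology" where
  "sorgenfrey01 = topology_generated_by {{a..<b} \<inter> {0..<1} | a b. True}"

text \<open>L(z): limits in the Euclidean [0,1] of sequences in [0,1) converging to z in X,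
  where [0,1) sits inside X via the embedding i.\<close>
definition Lset :: "'a topology \<Rightarrow> (real \<Rightarrow> 'a) \<Rightarrow> 'a \<Rightarrow> real set" where
  "Lset X i z = {x \<in> {0..1}. \<exists>p :: nat \<Rightarrow> real. (\<forall>n. p n \<in> {0..<1})
      \<and> limitin X (\<lambda>n. i (p n)) z sequentially \<and> p \<longlonglongrightarrow> x}"

end

theory Submission
  imports Defs
begin

text \<open>A point z outside [0,1) is a limit of points of the dense set [0,1), and by first
  countability of a sequence of them; Bolzano--Weierstrass in [0,1] gives an element of
  L(z). For well-ordering, fix y \<in> [0,1): Hausdorffness separates z from y by disjoint
  open sets A and B, and continuity of the embedding pulls B back to a Sorgenfrey
  neighbourhood [y, y+e) of y. A sequence converging to z eventually lies in A, so it
  cannot converge in the Euclidean sense to any point of (y, y+e). Thus every point of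
  [0,1) has a right gap free of L(z), which forces the infimum of any nonempty subset of
  L(z) to belong to it.\<close>

lemma openin_topology_generated_by_right_intervals:
  fixes A :: "real set"
  assumes "openin (topology_generated_by {{a..<b} \<inter> A | a b. True}) U" "y \<in> U"
  shows "\<exists>e>0. {y..<y+e} \<inter> A \<subseteq> U"
proof -
  have "generate_topology_on {{a..<b} \<inter> A | a b. True} U"
    using assms(1) by (rule openin_topology_generated_by)
  then show ?thesis using assms(2)
  proof (induction arbitrary: y)
    case Empty
    then show ?case by simp
  next
    case (Int U V)
    obtain d where "d > 0" "{y..<y+d} \<inter> A \<subseteq> U" using Int by blast
    moreover obtain e where "e > 0" "{y..<y+e} \<inter> A \<subseteq> V" using Int by blast
    moreover have "{y..<y + min d e} \<subseteq> {y..<y+d} \<inter> {y..<y+e}" by auto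
    ultimately have "{y..<y + min d e} \<inter> A \<subseteq> U \<inter> V" by blast
    then show ?case using \<open>d > 0\<close> \<open>e > 0\<close> by (intro exI[of _ "min d e"]) simp
  next
    case (UN K)
    then obtain k e where "k \<in> K" "e > 0" "{y..<y+e} \<inter> A \<subseteq> k" by blast
    then show ?case by blast
  next
    case (Basis s)
    then obtain a b where "s = {a..<b} \<inter> A" "a \<le> y" "y < b" by auto
    then show ?case by (intro exI[of _ "b - y"]) auto
  qed
qed

lemma topspace_sorgenfrey01: "topspace sorgenfrey01 = {0..<1}"
proof -
  have "{0..<1} \<inter> {0..<1} \<in> {{a..<b} \<inter> {0..<1::real} | a b. True}" by blast
  then show ?thesis unfolding sorgenfrey01_def topology_generated_by_topspace by blast
qed

lemma first_countable_limitin_closure_of: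
  assumes "first_countable X" "x \<in> X closure_of S"
  shows "\<exists>\<sigma>. range \<sigma> \<subseteq> S \<and> limitin X \<sigma> x sequentially"
proof -
  have x: "x \<in> topspace X" using assms(2) in_closure_of by fast
  then obtain \<B> where "countable \<B>" and \<B>_open: "\<forall>V\<in>\<B>. openin X V"
    and \<B>_base: "\<And>U. openin X U \<and> x \<in> U \<Longrightarrow> \<exists>V\<in>\<B>. x \<in> V \<and> V \<subseteq> U"
    using assms(1) unfolding first_countable_def by meson
  define \<C> where "\<C> = {V \<in> \<B>. x \<in> V}"
  obtain V where "V \<in> \<B>" "x \<in> V" using \<B>_base[of "topspace X"] x by (meson openin_topspace)
  then have "\<C> \<noteq> {}" unfolding \<C>_def by blast
  have "countable \<C>" using \<open>countable \<B>\<close> unfolding \<C>_def by (rule countable_Collect)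
  define W where "W n = (\<Inter>k\<le>n. from_nat_into \<C> k)" for n
  have "openin X (W n) \<and> x \<in> W n" for n
    using from_nat_into[OF \<open>\<C> \<noteq> {}\<close>] \<B>_open unfolding W_def \<C>_def by auto
  then have "\<exists>s\<in>S. s \<in> W n" for n
    using assms(2) unfolding in_closure_of by blast
  then obtain \<sigma> where \<sigma>: "\<And>n. \<sigma> n \<in> S \<and> \<sigma> n \<in> W n" by metis
  have "limitin X \<sigma> x sequentially"
    unfolding limitin_sequentially
  proof (intro conjI allI impI x)
    fix U assume "openin X U \<and> x \<in> U"
    then obtain V where "V \<in> \<C>" "V \<subseteq> U" using \<B>_base unfolding \<C>_def by blast
    then obtain k where "from_nat_into \<C> k \<subseteq> U"
      using from_nat_into_surj[OF \<open>countable \<C>\<close>] by metis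
    have "\<sigma> n \<in> U" if "k \<le> n" for n
    proof -
      have "W n \<subseteq> from_nat_into \<C> k" using that unfolding W_def by auto
      then show ?thesis using \<sigma> \<open>from_nat_into \<C> k \<subseteq> U\<close> by blast
    qed
    then show "\<exists>N. \<forall>n\<ge>N. \<sigma> n \<in> U" by blast
  qed
  then show ?thesis using \<sigma> by blast
qed

lemma Lset_subset: "Lset X i z \<subseteq> {0..1}"
  unfolding Lset_def by (rule Collect_restrict)

lemma Lset_nonempty:
  assumes "first_countable X" "z \<in> X closure_of (i ` {0..<1})"
  shows "Lset X i z \<noteq> {}"
proof -
  obtain \<sigma> where "range \<sigma> \<subseteq> i ` {0..<1}" and \<sigma>_lim: "limitin X \<sigma> z sequentially"
    using first_countable_limitin_closure_of[OF assms] by (elim exE conjE)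
  then have "\<forall>n. \<exists>x. x \<in> {0..<1} \<and> \<sigma> n = i x" by (meson imageE rangeI subsetD)
  then obtain p where p: "\<And>n. p n \<in> {0..<1} \<and> \<sigma> n = i (p n)"
    using choice[of "\<lambda>n x. x \<in> {0..<1} \<and> \<sigma> n = i x"] by auto
  then have "\<sigma> = (\<lambda>n. i (p n))" by auto
  then have p_lim: "limitin X (\<lambda>n. i (p n)) z sequentially" using \<sigma>_lim by simp
  have "\<forall>n. p n \<in> {0..1}" using p by (simp add: less_imp_le)
  then obtain l r where "l \<in> {0..1}" "strict_mono r" "(p \<circ> r) \<longlonglongrightarrow> l"
    by (rule seq_compactE[OF compact_imp_seq_compact[OF compact_Icc]])
  moreover have "limitin X (\<lambda>n. i ((p \<circ> r) n)) z sequentially"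
    using limitin_subsequence[OF \<open>strict_mono r\<close> p_lim] by (simp add: o_def)
  ultimately have "l \<in> Lset X i z"
    using p unfolding Lset_def by (intro CollectI conjI exI[of _ "p \<circ> r"]) auto
  then show ?thesis by auto
qed

lemma Lset_right_gap:
  assumes "Hausdorff_space X" "continuous_map sorgenfrey01 X i"
    and "z \<in> topspace X" "z \<notin> i ` {0..<1}" "y \<in> {0..<1}"
  shows "\<exists>e>0. Lset X i z \<inter> {y<..<y+e} = {}"
proof -
  have "i y \<in> topspace X"
    using continuous_map_image_subset_topspace[OF assms(2)] assms(5)
    by (auto simp: topspace_sorgenfrey01)
  moreover have "i y \<noteq> z" using assms(4,5) by auto
  ultimately obtain A B where "openin X A" "openin X B" "z \<in> A" "i y \<in> B" "disjnt A B"
    using assms(1,3) unfolding Hausdorff_space_def by metis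
  have "openin sorgenfrey01 {x \<in> {0..<1}. i x \<in> B}"
    using openin_continuous_map_preimage[OF assms(2) \<open>openin X B\<close>]
    by (simp add: topspace_sorgenfrey01)
  moreover have "y \<in> {x \<in> {0..<1}. i x \<in> B}" using assms(5) \<open>i y \<in> B\<close> by simp
  ultimately obtain e where "e > 0" and e: "{y..<y+e} \<inter> {0..<1} \<subseteq> {x \<in> {0..<1}. i x \<in> B}"
    using openin_topology_generated_by_right_intervals unfolding sorgenfrey01_def by blast
  have "x \<notin> Lset X i z" if "y < x" and "x < y + e" for x
  proof
    assume "x \<in> Lset X i z"
    then obtain q where q: "\<forall>n. q n \<in> {0..<1}" "limitin X (\<lambda>n. i (q n)) z sequentially"
      "q \<longlonglongrightarrow> x"
      unfolding Lset_def by auto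
    have "eventually (\<lambda>n. i (q n) \<in> A) sequentially"
      using q(2) \<open>openin X A\<close> \<open>z \<in> A\<close> by (simp add: limitin_def)
    moreover have "eventually (\<lambda>n. y < q n) sequentially"
      using order_tendstoD(1)[OF q(3) \<open>y < x\<close>] .
    moreover have "eventually (\<lambda>n. q n < y + e) sequentially"
      using order_tendstoD(2)[OF q(3) \<open>x < y + e\<close>] .
    ultimately have "eventually (\<lambda>n. i (q n) \<in> A \<and> y < q n \<and> q n < y + e) sequentially"
      by (intro eventually_conj)
    then obtain n where "i (q n) \<in> A" "y < q n" "q n < y + e"
      unfolding eventually_sequentially by blast
    then have "q n \<in> {y..<y+e} \<inter> {0..<1}" using q(1) by simp
    then have "i (q n) \<in> B" using e by blast
    then show False using \<open>i (q n) \<in> A\<close> \<open>disjnt A B\<close> by (auto simp: disjnt_def)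
  qed
  then show ?thesis using \<open>e > 0\<close> by auto
qed

lemma ex_least_if_right_gaps:
  fixes T :: "real set"
  assumes "T \<subseteq> {a..b}" "\<And>y. y \<in> {a..<b} \<Longrightarrow> \<exists>e>0. T \<inter> {y<..<y+e} = {}"
    and "S \<subseteq> T" "S \<noteq> {}"
  shows "\<exists>m\<in>S. \<forall>s\<in>S. m \<le> s"
proof -
  have "bdd_below S" using assms(1,3) by (meson atLeastAtMost_iff bdd_below_def subsetD)
  then have lower: "\<forall>s\<in>S. Inf S \<le> s" by (meson cInf_lower)
  have "Inf S \<in> S"
  proof (rule ccontr)
    assume "Inf S \<notin> S"
    have "\<forall>s\<in>S. a \<le> s" using assms(1,3) by auto
    then have "a \<le> Inf S" using cInf_greatest[OF assms(4)] by blast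
    moreover obtain t where "t \<in> S" using assms(4) by blast
    moreover have "t \<le> b" using assms(1,3) \<open>t \<in> S\<close> by auto
    moreover have "Inf S < t" using lower \<open>t \<in> S\<close> \<open>Inf S \<notin> S\<close> by (auto simp: less_le)
    ultimately have "Inf S \<in> {a..<b}" by simp
    then obtain e where "e > 0" and gap: "T \<inter> {Inf S<..<Inf S + e} = {}"
      using assms(2) by blast
    have "Inf S < Inf S + e" using \<open>e > 0\<close> by simp
    then obtain s where "s \<in> S" "s < Inf S + e"
      using cInf_less_iff[OF assms(4) \<open>bdd_below S\<close>] by blast
    moreover have "Inf S < s" using lower \<open>s \<in> S\<close> \<open>Inf S \<notin> S\<close> by (auto simp: less_le)
    ultimately show False using gap assms(3) by auto
  qed
  then show ?thesis using lower by blast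
qed

theorem mainTheorem13:
  fixes X :: "'a topology" and i :: "real \<Rightarrow> 'a"
  assumes "Hausdorff_space X"
    and "first_countable X"
    and "i ` {0..<1} \<subseteq> topspace X"
    and "homeomorphic_map sorgenfrey01 (subtopology X (i ` {0..<1})) i"
    and "X closure_of (i ` {0..<1}) = topspace X"
    and "X closure_of (topspace X - i ` {0..<1}) = topspace X"
    and "z \<in> topspace X - i ` {0..<1}"
  shows "Lset X i z \<noteq> {} \<and>
         (\<forall>S. S \<subseteq> Lset X i z \<and> S \<noteq> {} \<longrightarrow> (\<exists>m\<in>S. \<forall>s\<in>S. m \<le> s))"
proof
  show "Lset X i z \<noteq> {}"
    using Lset_nonempty[OF assms(2)] assms(5,7) by simp
  have "continuous_map sorgenfrey01 X i"
    using homeomorphic_imp_continuous_map[OF assms(4)] continuous_map_into_fulltopology by blast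
  moreover have "z \<in> topspace X" "z \<notin> i ` {0..<1}" using assms(7) by auto
  ultimately have gap: "\<And>y. y \<in> {0..<1} \<Longrightarrow> \<exists>e>0. Lset X i z \<inter> {y<..<y+e} = {}"
    using Lset_right_gap[OF assms(1)] by simp
  show "\<forall>S. S \<subseteq> Lset X i z \<and> S \<noteq> {} \<longrightarrow> (\<exists>m\<in>S. \<forall>s\<in>S. m \<le> s)"
    using ex_least_if_right_gaps[OF Lset_subset gap] by auto
qed

end
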